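(* Let $n\ge1$, $k\ge1$, and let $((i_1\,j_1),\dots,(i_k\,j_k))\in(\mathsf T_n)^k$ (with $i_l<j_l$ for all $l$) satisfy $i_1\le i_2\le\dots\le i_k$. The following are equivalent: 1. $((i_1\,j_1),\dots,(i_k\,j_k))\in\Sigma_n(k)$. 2. For all $l,m\in\{1,\dots,k\}$ with $l<m$, either $j_l\le i_m$ or $j_l>j_m$.
   Context: Let $n\ge1$. $\mathfrak S_n$ is the symmetric group on $\{1,\dots,n\}$; products of permutations are composed from right to left. $\mathsf T_n$ denotes the set of transpositions; a transposition is always written $(i\,j)$ with $i<j$. For $\sigma\in\mathfrak S_n$, $\ell(\sigma)$ is the number of cycles of $\sigma$ (fixed points counted) and $|\sigma|=n-\ell(\sigma)$. Write $\sigma_1\preccurlyeq\sigma_2$ iff $|\sigma_2|=|\sigma_1|+|\sigma_1^{-1}\sigma_2|$. For $k\ge0$, $\Sigma_n(k)=\{(\tau_1,\dots,\tau_k)\in(\mathsf T_n)^k : |\tau_1\cdots\tau_k|=k,\ \tau_1\cdots\tau_k\preccurlyeq(1\,2\,\dots\,n)\}$. *)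

theory Defs
  imports "HOL-Combinatorics.Combinatorics"
begin

text \<open>Permutations of {1..n} are represented as functions nat => nat (identity outside {1..n}).
  Products compose right to left, i.e. sigma1 sigma2 = sigma1 o sigma2.\<close>

definition is_transp :: "nat \<Rightarrow> nat \<times> nat \<Rightarrow> bool" where
  "is_transp n t \<longleftrightarrow> 1 \<le> fst t \<and> fst t < snd t \<and> snd t \<le> n"

definition transp_perm :: "nat \<times> nat \<Rightarrow> nat \<Rightarrow> nat" where
  "transp_perm t = transpose (fst t) (snd t)"

definition prod_transps :: "(nat \<times> nat) list \<Rightarrow> nat \<Rightarrow> nat" where
  "prod_transps ts = foldr (\<lambda>t acc. transp_perm t \<circ> acc) ts id"

definition num_cycles :: "nat \<Rightarrow> (nat \<Rightarrow> nat) \<Rightarrow> nat" where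
  "num_cycles n \<sigma> = card (orbit \<sigma> ` {1..n})"

definition perm_len :: "nat \<Rightarrow> (nat \<Rightarrow> nat) \<Rightarrow> nat" where
  "perm_len n \<sigma> = n - num_cycles n \<sigma>"

definition perm_le :: "nat \<Rightarrow> (nat \<Rightarrow> nat) \<Rightarrow> (nat \<Rightarrow> nat) \<Rightarrow> bool" where
  "perm_le n \<sigma>1 \<sigma>2 \<longleftrightarrow> perm_len n \<sigma>2 = perm_len n \<sigma>1 + perm_len n (inv \<sigma>1 \<circ> \<sigma>2)"

definition long_cycle :: "nat \<Rightarrow> nat \<Rightarrow> nat" where
  "long_cycle n i = (if 1 \<le> i \<and> i < n then i + 1 else if i = n then 1 else i)"

definition Sigma_n :: "nat \<Rightarrow> nat \<Rightarrow> (nat \<times> nat) list set" where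
  "Sigma_n n k = {ts. length ts = k \<and> (\<forall>t\<in>set ts. is_transp n t)
       \<and> perm_len n (prod_transps ts) = k
       \<and> perm_le n (prod_transps ts) (long_cycle n)}"

end

theory Submission
  imports Defs
begin

(* Let c = (1 2 \<dots> n) and P = \<tau>\<^sub>1 \<cdots> \<tau>\<^sub>k. Counting cycles, the tuple lies in \<Sigma>\<^sub>n(k) iff P has n - k cycles
   and P\<inverse> c = \<tau>\<^sub>k \<cdots> \<tau>\<^sub>1 c has k + 1 cycles. Composing with a transposition (a b) merges the
   cycles of a and b if they differ, and never adds more than one cycle.
   As long as the intervals [i\<^sub>l, j\<^sub>l) are pairwise nested or disjoint, the cycles of
   \<tau>\<^sub>m \<cdots> \<tau>\<^sub>1 c are the classes of points lying in the same intervals [i\<^sub>l, j\<^sub>l), l \<le> m, each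
   traversed in increasing cyclic order; so every further \<tau>\<^sub>m\<^sub>+\<^sub>1 splits a cycle, giving k + 1
   cycles at the end, while P is built by merges because \<tau>\<^sub>2 \<cdots> \<tau>\<^sub>k preserves [i\<^sub>1, j\<^sub>1).
   If the condition first fails at \<tau>\<^sub>m\<^sub>+\<^sub>1, then i\<^sub>m\<^sub>+\<^sub>1 and j\<^sub>m\<^sub>+\<^sub>1 lie in different cycles, that step
   merges, and \<tau>\<^sub>k \<cdots> \<tau>\<^sub>1 c ends up with fewer than k + 1 cycles. *)

section \<open>Composing a permutation with a transposition\<close>

lemma orbit_eq_if_mem:
  assumes "permutation f" "y \<in> orbit f x"
  shows "orbit f y = orbit f x"
  using orbit_cyclic_eq3[OF cyclic_on_orbit'[OF assms(1)] assms(2)] .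

lemma orbit_transpose_comp_eq:
  assumes perm: "permutation \<sigma>" and x: "x \<notin> orbit \<sigma> a" "x \<notin> orbit \<sigma> b"
  shows "orbit (transpose a b \<circ> \<sigma>) x = orbit \<sigma> x"
proof (rule orbit_cong)
  show "x \<in> orbit \<sigma> x" using permutation_self_in_orbit[OF perm] .
  fix s assume "s \<in> orbit \<sigma> x"
  then have s: "\<sigma> s \<in> orbit \<sigma> x" by (rule orbit.step)
  have "\<sigma> s \<noteq> c" if "c \<in> {a, b}" for c
    using orbit_eq_if_mem[OF perm s] permutation_self_in_orbit[OF perm, of x] x that by auto
  then show "(transpose a b \<circ> \<sigma>) s = \<sigma> s" by simp
qed

lemma orbit_subset_orbits_transpose_comp:
  assumes perm': "permutation (transpose a b \<circ> \<sigma>)"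
  shows "orbit \<sigma> a \<subseteq> orbit (transpose a b \<circ> \<sigma>) a \<union> orbit (transpose a b \<circ> \<sigma>) b"
proof
  let ?\<sigma>' = "transpose a b \<circ> \<sigma>"
  have endpoints: "c \<in> orbit ?\<sigma>' a \<union> orbit ?\<sigma>' b" if "c \<in> {a, b}" for c
    using that permutation_self_in_orbit[OF perm'] by auto
  fix z assume "z \<in> orbit \<sigma> a"
  then show "z \<in> orbit ?\<sigma>' a \<union> orbit ?\<sigma>' b"
  proof induction
    case base
    show ?case
    proof (cases "\<sigma> a \<in> {a, b}")
      case False
      then have "?\<sigma>' a = \<sigma> a" by simp
      then show ?thesis by (metis UnI1 orbit.base)
    qed (rule endpoints)
  next
    case (step z)
    show ?case
    proof (cases "\<sigma> z \<in> {a, b}")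
      case False
      then have "?\<sigma>' z = \<sigma> z" by simp
      then show ?thesis using step.IH by (metis Un_iff orbit.step)
    qed (rule endpoints)
  qed
qed

lemma mem_orbit_transpose_comp:
  assumes perm: "permutation \<sigma>" and b: "b \<notin> orbit \<sigma> a"
  shows "b \<in> orbit (transpose a b \<circ> \<sigma>) a"
proof -
  let ?\<sigma>' = "transpose a b \<circ> \<sigma>"
  have bij: "bij \<sigma>" using perm permutation_bijective by blast
  define p where "p = inv \<sigma> a"
  have \<sigma>p: "\<sigma> p = a" unfolding p_def using bij by (simp add: bij_is_surj surj_f_inv_f)
  have "p \<in> orbit \<sigma> a"
    using orbit_inv_eq[OF perm, of a] orbit.base[of "inv \<sigma>" a] by (simp add: p_def)
  define j where "j = funpow_dist \<sigma> a p"
  have "(\<sigma> ^^ i) a \<noteq> p" if "i < j" for i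
    using funpow_dist_least that by (simp add: j_def)
  \<comment> \<open>up to the preimage p of a, the path from a avoids a and b, so \<sigma>' follows \<sigma>\<close>
  then have agree: "(?\<sigma>' ^^ i) a = (\<sigma> ^^ i) a" if "i \<le> j" for i
    using that
  proof (induction i)
    case (Suc i)
    have "\<sigma> ((\<sigma> ^^ i) a) \<noteq> a"
      using Suc.prems \<sigma>p bij by (metis Suc_le_lessD bij_pointE)
    moreover have "\<sigma> ((\<sigma> ^^ i) a) \<noteq> b"
      using b funpow_in_orbit[OF orbit.base[of \<sigma> a], of i] by (auto simp: funpow_swap1)
    ultimately show ?case using Suc by simp
  qed simp
  have "(?\<sigma>' ^^ Suc j) a = b"
    using agree[of j] funpow_dist_prop[OF \<open>p \<in> orbit \<sigma> a\<close>] \<sigma>p by (simp add: j_def)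
  then show ?thesis unfolding orbit_altdef by (intro CollectI exI[of _ "Suc j"]) simp
qed

lemma orbits_transpose_comp_subset:
  assumes perm: "permutation \<sigma>" and perm': "permutation (transpose a b \<circ> \<sigma>)"
  shows "orbit (transpose a b \<circ> \<sigma>) ` S \<subseteq>
    orbit \<sigma> ` (S - (orbit \<sigma> a \<union> orbit \<sigma> b)) \<union>
    {orbit (transpose a b \<circ> \<sigma>) a, orbit (transpose a b \<circ> \<sigma>) b}"
proof
  let ?\<sigma>' = "transpose a b \<circ> \<sigma>"
  fix Y assume "Y \<in> orbit ?\<sigma>' ` S"
  then obtain x where x: "x \<in> S" "Y = orbit ?\<sigma>' x" by blast
  show "Y \<in> orbit \<sigma> ` (S - (orbit \<sigma> a \<union> orbit \<sigma> b)) \<union> {orbit ?\<sigma>' a, orbit ?\<sigma>' b}"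
  proof (cases "x \<in> orbit \<sigma> a \<union> orbit \<sigma> b")
    case True
    have "orbit \<sigma> b \<subseteq> orbit ?\<sigma>' b \<union> orbit ?\<sigma>' a"
      using orbit_subset_orbits_transpose_comp[of b a \<sigma>] perm' by (simp add: transpose_commute)
    then have "x \<in> orbit ?\<sigma>' a \<union> orbit ?\<sigma>' b"
      using True orbit_subset_orbits_transpose_comp[OF perm'] by blast
    then show ?thesis using x orbit_eq_if_mem[OF perm'] by blast
  next
    case False
    then show ?thesis using x orbit_transpose_comp_eq[OF perm] by auto
  qed
qed

lemma card_orbits_transpose_comp_le:
  assumes perm: "\<sigma> permutes S" and fin: "finite S" and ab: "a \<in> S" "b \<in> S"
  shows "card (orbit (transpose a b \<circ> \<sigma>) ` S) \<le> card (orbit \<sigma> ` S) + 1"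
proof -
  let ?\<sigma>' = "transpose a b \<circ> \<sigma>"
  define X where "X = orbit \<sigma> ` (S - (orbit \<sigma> a \<union> orbit \<sigma> b))"
  have perm\<sigma>: "permutation \<sigma>" and perm\<sigma>': "permutation ?\<sigma>'"
    using perm permutes_compose[OF perm permutes_swap_id[OF ab]] fin
    by (auto simp: permutation_permutes)
  have new: "orbit \<sigma> a \<notin> X"
    unfolding X_def using permutation_self_in_orbit[OF perm\<sigma>] by auto
  have "insert (orbit \<sigma> a) X \<subseteq> orbit \<sigma> ` S"
    using ab unfolding X_def by auto
  from card_mono[OF _ this] have "card X + 1 \<le> card (orbit \<sigma> ` S)"
    using fin new by (simp add: X_def)
  moreover have "card (orbit ?\<sigma>' ` S) \<le> card X + 2"
  proof -
    have "card (orbit ?\<sigma>' ` S) \<le> card (X \<union> {orbit ?\<sigma>' a, orbit ?\<sigma>' b})"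
      using orbits_transpose_comp_subset[OF perm\<sigma> perm\<sigma>', of S] fin
      by (intro card_mono) (auto simp: X_def)
    also have "\<dots> \<le> card X + card {orbit ?\<sigma>' a, orbit ?\<sigma>' b}" by (rule card_Un_le)
    also have "\<dots> \<le> card X + 2" by (simp add: card_insert_le_m1)
    finally show ?thesis .
  qed
  ultimately show ?thesis by linarith
qed

lemma card_orbits_transpose_comp_merge:
  assumes perm: "\<sigma> permutes S" and fin: "finite S" and ab: "a \<in> S" "b \<in> S"
    and b: "b \<notin> orbit \<sigma> a"
  shows "card (orbit (transpose a b \<circ> \<sigma>) ` S) + 1 = card (orbit \<sigma> ` S)"
proof -
  let ?\<sigma>' = "transpose a b \<circ> \<sigma>"
  define X where "X = orbit \<sigma> ` (S - (orbit \<sigma> a \<union> orbit \<sigma> b))"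
  have perm': "?\<sigma>' permutes S" using permutes_compose[OF perm permutes_swap_id[OF ab]] .
  have perm\<sigma>: "permutation \<sigma>" and perm\<sigma>': "permutation ?\<sigma>'"
    using perm perm' fin by (auto simp: permutation_permutes)
  have "orbit ?\<sigma>' b = orbit ?\<sigma>' a"
    using orbit_eq_if_mem[OF perm\<sigma>' mem_orbit_transpose_comp[OF perm\<sigma> b]] .
  then have "card (orbit ?\<sigma>' ` S) \<le> card (insert (orbit ?\<sigma>' a) X)"
    using orbits_transpose_comp_subset[OF perm\<sigma> perm\<sigma>', of S] fin
    by (intro card_mono) (auto simp: X_def)
  also have "\<dots> \<le> card X + 1" using fin by (simp add: X_def card_insert_if)
  finally have "card (orbit ?\<sigma>' ` S) \<le> card X + 1" .
  moreover have "card X + 2 \<le> card (orbit \<sigma> ` S)"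
  proof -
    have new: "orbit \<sigma> a \<noteq> orbit \<sigma> b" "orbit \<sigma> a \<notin> X" "orbit \<sigma> b \<notin> X"
      using b permutation_self_in_orbit[OF perm\<sigma>] unfolding X_def by auto
    have "insert (orbit \<sigma> a) (insert (orbit \<sigma> b) X) \<subseteq> orbit \<sigma> ` S"
      using ab unfolding X_def by auto
    from card_mono[OF _ this] show ?thesis
      using fin new by (simp add: X_def)
  qed
  moreover have "card (orbit \<sigma> ` S) \<le> card (orbit ?\<sigma>' ` S) + 1"
    using card_orbits_transpose_comp_le[OF perm' fin ab] by (simp add: o_assoc)
  ultimately show ?thesis by linarith
qed

section \<open>Cyclic successor in a finite set of naturals\<close>

definition cyclic_succ :: "nat set \<Rightarrow> nat \<Rightarrow> nat" where
  "cyclic_succ A x = (if \<exists>y\<in>A. x < y then Min {y\<in>A. x < y} else Min A)"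

lemma cyclic_succ_in: "finite A \<Longrightarrow> A \<noteq> {} \<Longrightarrow> cyclic_succ A x \<in> A"
  using Min_in[of "{y\<in>A. x < y}"] by (auto simp: cyclic_succ_def)

lemma cyclic_succ_between:
  assumes "finite A" "z \<in> A" "x < z"
  shows "x < cyclic_succ A x \<and> cyclic_succ A x \<le> z"
proof -
  have "Min {y\<in>A. x < y} \<in> {y\<in>A. x < y}" using assms by (intro Min_in) auto
  moreover have "Min {y\<in>A. x < y} \<le> z" using assms by (intro Min_le) auto
  moreover have "cyclic_succ A x = Min {y\<in>A. x < y}" using assms by (auto simp: cyclic_succ_def)
  ultimately show ?thesis by simp
qed

lemma cyclic_succ_wrap: "finite A \<Longrightarrow> \<forall>z\<in>A. z \<le> x \<Longrightarrow> cyclic_succ A x = Min A"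
  by (auto simp: cyclic_succ_def not_less)

lemma cyclic_succ_eqI:
  "finite A \<Longrightarrow> y \<in> A \<Longrightarrow> x < y \<Longrightarrow> (\<And>z. z \<in> A \<Longrightarrow> x < z \<Longrightarrow> y \<le> z) \<Longrightarrow> cyclic_succ A x = y"
  unfolding cyclic_succ_def by (auto intro!: Min_eqI)

lemma cyclic_succ_le_self:
  assumes "finite A" "cyclic_succ A x \<le> x" "z \<in> A"
  shows "cyclic_succ A x \<le> z \<and> z \<le> x"
proof -
  have "\<forall>z\<in>A. z \<le> x"
    using assms(2) cyclic_succ_between[OF assms(1)] by (meson leD not_le_imp_less)
  then show ?thesis using assms cyclic_succ_wrap by simp
qed

lemma cyclic_succ_subset:
  assumes fin: "finite A" and sub: "B \<subseteq> A" and in_B: "cyclic_succ A x \<in> B"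
  shows "cyclic_succ B x = cyclic_succ A x"
proof -
  have finB: "finite B" using sub fin by (rule finite_subset)
  show ?thesis
  proof (cases "x < cyclic_succ A x")
    case True
    show ?thesis
    proof (rule cyclic_succ_eqI[OF finB in_B True])
      fix z assume "z \<in> B" "x < z"
      then show "cyclic_succ A x \<le> z" using sub cyclic_succ_between[OF fin, of z x] by auto
    qed
  next
    case False
    then have le: "cyclic_succ A x \<le> z \<and> z \<le> x" if "z \<in> B" for z
      using cyclic_succ_le_self[OF fin _ subsetD[OF sub that]] by (simp add: not_less)
    then have "cyclic_succ B x = Min B" by (intro cyclic_succ_wrap[OF finB]) simp
    also have "\<dots> = cyclic_succ A x"
      by (rule Min_eqI[OF finB _ in_B]) (simp add: le)
    finally show ?thesis .
  qed
qed

lemma cyclic_succ_Max: "finite A \<Longrightarrow> A \<noteq> {} \<Longrightarrow> cyclic_succ A (Max A) = Min A"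
  by (simp add: cyclic_succ_wrap)

lemma cyclic_succ_pred:
  assumes fin: "finite A" and y: "y \<in> A" "Min A < y"
  obtains w where "w \<in> A" "w < y" "cyclic_succ A w = y"
proof
  define w where "w = Max {z\<in>A. z < y}"
  have "Min A \<in> A" using fin y(1) by (intro Min_in) auto
  then have "w \<in> {z\<in>A. z < y}"
    unfolding w_def using y fin by (intro Max_in) auto
  then show "w \<in> A" "w < y" by auto
  have below: "z \<le> w" if "z \<in> A" "z < y" for z
    unfolding w_def using that fin by (intro Max_ge) auto
  show "cyclic_succ A w = y"
  proof (rule cyclic_succ_eqI[OF fin y(1) \<open>w < y\<close>])
    fix z assume "z \<in> A" "w < z"
    then show "y \<le> z" using below[of z] by (meson leD not_le_imp_less)
  qed
qed

lemma orbit_eq_if_cyclic_succ: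
  assumes fin: "finite A" and x: "x \<in> A" and f: "\<And>z. z \<in> A \<Longrightarrow> f z = cyclic_succ A z"
  shows "orbit f x = A"
proof
  have ne: "A \<noteq> {}" using x by auto
  show sub: "orbit f x \<subseteq> A"
  proof
    fix z assume "z \<in> orbit f x"
    then show "z \<in> A"
      by induction (use x f cyclic_succ_in[OF fin ne] in simp_all)
  qed
  let ?B = "orbit f x"
  have finB: "finite ?B" using sub fin by (rule finite_subset)
  have closed: "f z \<in> ?B" if "z \<in> ?B" for z using that by (rule orbit.step)
  have "Max ?B = Max A"
  proof (rule ccontr)
    assume "Max ?B \<noteq> Max A"
    then have "Max ?B < Max A" using Max_mono[OF sub orbit_nonempty fin] by simp
    then have "Max ?B < f (Max ?B)"
      using Max_in[OF finB orbit_nonempty] f sub cyclic_succ_between[OF fin Max_in[OF fin ne]]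
      by auto
    then show False
      using closed[OF Max_in[OF finB orbit_nonempty]] Max_ge[OF finB, of "f (Max ?B)"] by linarith
  qed
  then have "Min A \<in> ?B"
    using closed[OF Max_in[OF finB orbit_nonempty]] f[OF Max_in[OF fin ne]]
      cyclic_succ_Max[OF fin ne] by simp
  show "A \<subseteq> ?B"
  proof
    fix y assume "y \<in> A"
    then show "y \<in> ?B"
    proof (induction y rule: less_induct)
      case (less y)
      show ?case
      proof (cases "y = Min A")
        case False
        then have "Min A < y" using less.prems fin Min_le le_neq_implies_less by metis
        then obtain w where "w \<in> A" "w < y" "cyclic_succ A w = y"
          using cyclic_succ_pred[OF fin less.prems] by blast
        then show ?thesis using less.IH[of w] closed f by metis
      qed (use \<open>Min A \<in> ?B\<close> in simp)
    qed
  qed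
qed

lemma transpose_cyclic_succ_inside:
  fixes C :: "nat set"
  assumes fin: "finite C" and ab: "a \<in> C" "b \<in> C" and x: "x \<in> C" "x \<in> {a..<b}"
  shows "transpose a b (cyclic_succ C x) = cyclic_succ (C \<inter> {a..<b}) x"
proof -
  define y where "y = cyclic_succ C x"
  have finD: "finite (C \<inter> {a..<b})" using fin by simp
  have "y \<in> C" using cyclic_succ_in[OF fin] x(1) by (auto simp: y_def)
  moreover have "x < y" "y \<le> b" and above: "\<And>z. z \<in> C \<Longrightarrow> x < z \<Longrightarrow> y \<le> z"
    using cyclic_succ_between[OF fin ab(2)] cyclic_succ_between[OF fin] x by (auto simp: y_def)
  ultimately have y: "y \<in> C" "x < y" "y \<le> b" by blast+
  show ?thesis
  proof (cases "y = b")
    case True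
    then have "\<forall>z\<in>C \<inter> {a..<b}. z \<le> x" using above by (meson IntD1 IntD2 atLeastLessThan_iff leI leD)
    then have "cyclic_succ (C \<inter> {a..<b}) x = Min (C \<inter> {a..<b})" by (rule cyclic_succ_wrap[OF finD])
    also have "\<dots> = a" using ab x by (intro Min_eqI finD) auto
    finally show ?thesis using True by (simp add: y_def)
  next
    case False
    then have "y \<in> C \<inter> {a..<b}" "y \<notin> {a, b}" using y x by auto
    then show ?thesis
      using cyclic_succ_subset[OF fin, of "C \<inter> {a..<b}" x] by (simp add: y_def)
  qed
qed

lemma transpose_cyclic_succ_outside:
  fixes C :: "nat set"
  assumes fin: "finite C" and ab: "a \<in> C" "b \<in> C" "a < b" and x: "x \<in> C" "x \<notin> {a..<b}"
  shows "transpose a b (cyclic_succ C x) = cyclic_succ (C - {a..<b}) x"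
proof -
  define y where "y = cyclic_succ C x"
  have finD: "finite (C - {a..<b})" using fin by simp
  have above: "x < z \<Longrightarrow> z \<in> C \<Longrightarrow> x < y \<and> y \<le> z" for z
    unfolding y_def by (rule cyclic_succ_between[OF fin])
  have wrap: "y \<le> x \<Longrightarrow> z \<in> C \<Longrightarrow> y \<le> z \<and> z \<le> x" for z
    unfolding y_def by (rule cyclic_succ_le_self[OF fin])
  show ?thesis
  proof (cases "y = a")
    case True
    have "cyclic_succ (C - {a..<b}) x = b"
    proof (cases "x < a")
      case True
      show ?thesis
      proof (rule cyclic_succ_eqI[OF finD])
        show "b \<in> C - {a..<b}" "x < b" using ab True by auto
        fix z assume "z \<in> C - {a..<b}" "x < z"
        then show "b \<le> z" using above[of z] \<open>y = a\<close> by auto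
      qed
    next
      case False
      then have "b \<le> x" using x by auto
      then have "a \<le> z \<and> z \<le> x" if "z \<in> C" for z using wrap[of z] that \<open>y = a\<close> ab by auto
      then have bounds: "b \<le> z \<and> z \<le> x" if "z \<in> C - {a..<b}" for z using that by fastforce
      then have "cyclic_succ (C - {a..<b}) x = Min (C - {a..<b})"
        by (intro cyclic_succ_wrap[OF finD]) blast
      also have "\<dots> = b" using ab bounds by (intro Min_eqI finD) auto
      finally show ?thesis .
    qed
    then show ?thesis using True by (simp add: y_def)
  next
    case False
    have "y \<in> C" using cyclic_succ_in[OF fin] x by (auto simp: y_def)
    moreover have "y \<notin> {a..b}"
    proof (cases "x < y")
      case True
      then show ?thesis using above[of a] above[of b] ab x False by auto
    next
      case False
      then show ?thesis using wrap[of a] ab \<open>y \<noteq> a\<close> by auto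
    qed
    ultimately have "y \<in> C - {a..<b}" "y \<notin> {a, b}" using ab by auto
    then show ?thesis
      using cyclic_succ_subset[OF fin, of "C - {a..<b}" x] by (simp add: y_def)
  qed
qed

section \<open>Products of transpositions and the long cycle\<close>

lemma prod_transps_Nil [simp]: "prod_transps [] = id"
  by (simp add: prod_transps_def)

lemma prod_transps_Cons [simp]: "prod_transps (t # ts) = transp_perm t \<circ> prod_transps ts"
  by (simp add: prod_transps_def)

lemma prod_transps_append: "prod_transps (xs @ ys) = prod_transps xs \<circ> prod_transps ys"
  by (induction xs) (simp_all add: o_assoc)

lemma prod_transps_rev_comp: "prod_transps (rev ts) \<circ> prod_transps ts = id"
proof (induction ts)
  case (Cons t ts)
  have "transp_perm t \<circ> transp_perm t = id" by (simp add: transp_perm_def)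
  then have "prod_transps (rev (t # ts)) \<circ> prod_transps (t # ts) =
      prod_transps (rev ts) \<circ> prod_transps ts"
    by (simp only: rev.simps prod_transps_append prod_transps_Cons prod_transps_Nil
        comp_id comp_assoc[symmetric]) (simp only: comp_assoc comp_id)
  also have "\<dots> = id" by (rule Cons.IH)
  finally show ?case .
qed simp

lemma inv_prod_transps: "inv (prod_transps ts) = prod_transps (rev ts)"
  using prod_transps_rev_comp[of ts] prod_transps_rev_comp[of "rev ts"]
  by (intro inv_unique_comp) simp_all

lemma transp_perm_permutes: "is_transp n t \<Longrightarrow> transp_perm t permutes {1..n}"
  unfolding transp_perm_def is_transp_def by (intro permutes_swap_id) auto

lemma prod_transps_permutes: "\<forall>t\<in>set ts. is_transp n t \<Longrightarrow> prod_transps ts permutes {1..n}"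
proof (induction ts)
  case (Cons t ts)
  then have "transp_perm t \<circ> prod_transps ts permutes {1..n}"
    by (intro permutes_compose transp_perm_permutes) auto
  then show ?case by (simp only: prod_transps_Cons)
qed (simp add: permutes_id)

lemma long_cycle_eq_cyclic_succ: "x \<in> {1..n} \<Longrightarrow> long_cycle n x = cyclic_succ {1..n} x"
proof (cases "x < n")
  case True
  assume "x \<in> {1..n}"
  then show ?thesis using True by (intro cyclic_succ_eqI[symmetric]) (auto simp: long_cycle_def)
next
  case False
  assume x: "x \<in> {1..n}"
  then have "cyclic_succ {1..n} x = Min {1..n}" using False by (intro cyclic_succ_wrap) auto
  moreover have "Min {1..n} = 1" using x by (intro Min_eqI) auto
  ultimately show ?thesis using x False by (simp add: long_cycle_def)
qed

lemma long_cycle_permutes: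
  assumes "1 \<le> n" shows "long_cycle n permutes {1..n}"
proof (rule bij_imp_permutes)
  have "inj_on (long_cycle n) {1..n}"
    by (auto simp: inj_on_def long_cycle_def split: if_splits)
  moreover have "long_cycle n ` {1..n} \<subseteq> {1..n}" using assms by (auto simp: long_cycle_def)
  ultimately show "bij_betw (long_cycle n) {1..n} {1..n}"
    by (simp add: bij_betw_def endo_inj_surj)
qed (use assms in \<open>auto simp: long_cycle_def\<close>)

lemma num_cycles_le: "num_cycles n f \<le> n"
  unfolding num_cycles_def using card_image_le[of "{1..n}" "orbit f"] by simp

lemma num_cycles_pos: "1 \<le> n \<Longrightarrow> 1 \<le> num_cycles n f"
  unfolding num_cycles_def by (simp add: Suc_le_eq card_gt_0_iff)

lemma num_cycles_id: "num_cycles n id = n"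
proof -
  have "orbit id x = {x}" for x :: nat by (simp add: orbit_eq_singleton_iff)
  then have "orbit id ` {1..n} = (\<lambda>x. {x}) ` {1..n}" by simp
  then show ?thesis unfolding num_cycles_def by (simp add: card_image)
qed

lemma num_cycles_long_cycle:
  assumes "1 \<le> n" shows "num_cycles n (long_cycle n) = 1"
proof -
  have "orbit (long_cycle n) x = {1..n}" if "x \<in> {1..n}" for x
    using that long_cycle_eq_cyclic_succ by (intro orbit_eq_if_cyclic_succ) auto
  then have "orbit (long_cycle n) ` {1..n} = {{1..n}}" using assms by auto
  then show ?thesis by (simp add: num_cycles_def)
qed

section \<open>Nested transpositions and the cycles of quot_cycle\<close>

definition transp_interval :: "nat \<times> nat \<Rightarrow> nat set" where
  "transp_interval t = {fst t..<snd t}"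

definition block :: "nat \<Rightarrow> (nat \<times> nat) list \<Rightarrow> nat \<Rightarrow> nat \<Rightarrow> nat set" where
  "block n ts m x =
    {y \<in> {1..n}. \<forall>l<m. x \<in> transp_interval (ts ! l) \<longleftrightarrow> y \<in> transp_interval (ts ! l)}"

definition nested_upto :: "(nat \<times> nat) list \<Rightarrow> nat \<Rightarrow> bool" where
  "nested_upto ts m \<longleftrightarrow>
    (\<forall>l j. l < j \<and> j < m \<longrightarrow> snd (ts ! l) \<le> fst (ts ! j) \<or> snd (ts ! j) < snd (ts ! l))"

(* (\<tau>\<^sub>1 \<cdots> \<tau>\<^sub>m)\<inverse> (1 2 \<dots> n) = \<tau>\<^sub>m \<cdots> \<tau>\<^sub>1 (1 2 \<dots> n) *)
definition quot_cycle :: "(nat \<times> nat) list \<Rightarrow> nat \<Rightarrow> nat \<Rightarrow> nat \<Rightarrow> nat" where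
  "quot_cycle ts n m = prod_transps (rev (take m ts)) \<circ> long_cycle n"

lemma quot_cycle_0 [simp]: "quot_cycle ts n 0 = long_cycle n"
  by (simp add: quot_cycle_def)

lemma quot_cycle_Suc:
  "m < length ts \<Longrightarrow> quot_cycle ts n (Suc m) = transp_perm (ts ! m) \<circ> quot_cycle ts n m"
  by (simp add: quot_cycle_def take_Suc_conv_app_nth o_assoc)

lemma inv_prod_transps_comp_long_cycle:
  "inv (prod_transps ts) \<circ> long_cycle n = quot_cycle ts n (length ts)"
  by (simp add: quot_cycle_def inv_prod_transps)

lemma quot_cycle_permutes:
  assumes "1 \<le> n" "\<forall>t\<in>set ts. is_transp n t"
  shows "quot_cycle ts n m permutes {1..n}"
  unfolding quot_cycle_def using assms set_take_subset[of m ts]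
  by (intro permutes_compose long_cycle_permutes prod_transps_permutes) auto

lemma block_0 [simp]: "block n ts 0 x = {1..n}"
  by (auto simp: block_def)

lemma mem_block_self: "x \<in> {1..n} \<Longrightarrow> x \<in> block n ts m x"
  by (simp add: block_def)

lemma block_subset: "block n ts m x \<subseteq> {1..n}"
  by (auto simp: block_def)

lemma finite_block: "finite (block n ts m x)"
  by (rule finite_subset[OF block_subset]) simp

lemma block_eq_if_mem: "y \<in> block n ts m x \<Longrightarrow> block n ts m y = block n ts m x"
  by (auto simp: block_def)

lemma block_Suc:
  "block n ts (Suc m) x =
    (if x \<in> transp_interval (ts ! m) then block n ts m x \<inter> transp_interval (ts ! m)
     else block n ts m x - transp_interval (ts ! m))"
  by (auto simp: block_def less_Suc_eq)

lemma is_transp_nthD: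
  assumes "\<forall>t\<in>set ts. is_transp n t" "m < length ts"
  shows "1 \<le> fst (ts ! m)" "fst (ts ! m) < snd (ts ! m)" "snd (ts ! m) \<le> n"
  using assms(1) nth_mem[OF assms(2)] by (auto simp: is_transp_def)

lemma nested_upto_Suc:
  "nested_upto ts (Suc m) \<longleftrightarrow> nested_upto ts m \<and>
    (\<forall>l<m. snd (ts ! l) \<le> fst (ts ! m) \<or> snd (ts ! m) < snd (ts ! l))"
  by (auto simp: nested_upto_def less_Suc_eq)

lemma nested_upto_Cons:
  assumes nested: "nested_upto (t # ts) (length (t # ts))"
  shows "nested_upto ts (length ts)" "\<forall>t'\<in>set ts. snd t \<le> fst t' \<or> snd t' < snd t"
proof -
  show "nested_upto ts (length ts)"
    unfolding nested_upto_def
  proof (intro allI impI)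
    fix l j assume "l < j \<and> j < length ts"
    then show "snd (ts ! l) \<le> fst (ts ! j) \<or> snd (ts ! j) < snd (ts ! l)"
      using nested[unfolded nested_upto_def, rule_format, of "Suc l" "Suc j"] by simp
  qed
  show "\<forall>t'\<in>set ts. snd t \<le> fst t' \<or> snd t' < snd t"
  proof
    fix t' assume "t' \<in> set ts"
    then obtain j where "j < length ts" "t' = ts ! j" by (auto simp: in_set_conv_nth)
    then show "snd t \<le> fst t' \<or> snd t' < snd t"
      using nested[unfolded nested_upto_def, rule_format, of 0 "Suc j"] by simp
  qed
qed

lemma interval_subset_block:
  assumes tr: "\<forall>t\<in>set ts. is_transp n t" and so: "sorted (map fst ts)"
    and m: "m < length ts" and nested: "nested_upto ts (Suc m)"
  shows "{fst (ts ! m)..snd (ts ! m)} \<subseteq> block n ts m (fst (ts ! m))"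
proof
  fix y assume y: "y \<in> {fst (ts ! m)..snd (ts ! m)}"
  note bounds = is_transp_nthD[OF tr m]
  have "fst (ts ! m) \<in> transp_interval (ts ! l) \<longleftrightarrow> y \<in> transp_interval (ts ! l)"
    if l: "l < m" for l
  proof -
    have "fst (ts ! l) \<le> fst (ts ! m)"
      using sorted_nth_mono[OF so, of l m] l m by simp
    moreover have "snd (ts ! l) \<le> fst (ts ! m) \<or> snd (ts ! m) < snd (ts ! l)"
      using nested l by (simp add: nested_upto_Suc)
    ultimately show ?thesis using y by (auto simp: transp_interval_def)
  qed
  then show "y \<in> block n ts m (fst (ts ! m))"
    using y bounds by (auto simp: block_def)
qed

lemma block_disjoint_interval:
  assumes tr: "\<forall>t\<in>set ts. is_transp n t" and so: "sorted (map fst ts)"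
    and m: "m < length ts" and nested: "nested_upto ts (Suc m)"
    and other: "block n ts m x \<noteq> block n ts m (fst (ts ! m))"
  shows "block n ts m x \<inter> {fst (ts ! m)..snd (ts ! m)} = {}"
proof -
  have "y \<notin> {fst (ts ! m)..snd (ts ! m)}" if y: "y \<in> block n ts m x" for y
  proof
    assume "y \<in> {fst (ts ! m)..snd (ts ! m)}"
    then have "block n ts m y = block n ts m (fst (ts ! m))"
      using interval_subset_block[OF tr so m nested] block_eq_if_mem by blast
    then show False using block_eq_if_mem[OF y] other by simp
  qed
  then show ?thesis by blast
qed

lemma quot_cycle_eq_cyclic_succ:
  assumes tr: "\<forall>t\<in>set ts. is_transp n t" and so: "sorted (map fst ts)"
  shows "m \<le> length ts \<Longrightarrow> nested_upto ts m \<Longrightarrow> x \<in> {1..n} \<Longrightarrow>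
    quot_cycle ts n m x = cyclic_succ (block n ts m x) x"
proof (induction m arbitrary: x)
  case 0
  then show ?case by (simp add: long_cycle_eq_cyclic_succ)
next
  case (Suc m)
  define a b where "a = fst (ts ! m)" and "b = snd (ts ! m)"
  define C where "C = block n ts m a"
  have m: "m < length ts" using Suc.prems(1) by simp
  have ab: "a < b" using is_transp_nthD[OF tr m] by (simp add: a_def b_def)
  have x: "x \<in> block n ts m x" using mem_block_self[OF Suc.prems(3)] .
  have I: "transp_interval (ts ! m) = {a..<b}" by (simp add: transp_interval_def a_def b_def)
  have "quot_cycle ts n m x = cyclic_succ (block n ts m x) x"
    using Suc.IH Suc.prems by (simp add: nested_upto_Suc)
  then have step: "quot_cycle ts n (Suc m) x = transpose a b (cyclic_succ (block n ts m x) x)"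
    by (simp add: quot_cycle_Suc[OF m] transp_perm_def a_def b_def)
  show ?case
  proof (cases "block n ts m x = C")
    case True
    have "{a..b} \<subseteq> C"
      unfolding a_def b_def C_def using interval_subset_block[OF tr so m Suc.prems(2)] .
    then have abC: "a \<in> C" "b \<in> C" using ab by auto
    have finC: "finite C" by (simp add: C_def finite_block)
    have xC: "x \<in> C" using x True by simp
    show ?thesis
    proof (cases "x \<in> {a..<b}")
      case True
      then show ?thesis using step transpose_cyclic_succ_inside[OF finC abC xC True]
        by (simp add: block_Suc I \<open>block n ts m x = C\<close>)
    next
      case False
      then show ?thesis using step transpose_cyclic_succ_outside[OF finC abC ab xC False]
        by (auto simp: block_Suc I \<open>block n ts m x = C\<close>)
    qed
  next
    case False
    then have disjoint: "block n ts m x \<inter> {a..b} = {}"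
      using block_disjoint_interval[OF tr so m Suc.prems(2)] by (simp add: a_def b_def C_def)
    have "cyclic_succ (block n ts m x) x \<in> block n ts m x"
      using cyclic_succ_in[OF finite_block] x by blast
    then have "cyclic_succ (block n ts m x) x \<notin> {a, b}" using disjoint ab by auto
    moreover have "x \<notin> {a..<b}" "block n ts m x - {a..<b} = block n ts m x"
      using disjoint x by auto
    ultimately show ?thesis using step by (auto simp: block_Suc I)
  qed
qed

lemma orbit_quot_cycle:
  assumes tr: "\<forall>t\<in>set ts. is_transp n t" and so: "sorted (map fst ts)"
    and m: "m \<le> length ts" and nested: "nested_upto ts m" and x: "x \<in> {1..n}"
  shows "orbit (quot_cycle ts n m) x = block n ts m x"
proof (rule orbit_eq_if_cyclic_succ[OF finite_block mem_block_self[OF x]])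
  fix z assume z: "z \<in> block n ts m x"
  then have "z \<in> {1..n}" using block_subset by blast
  then show "quot_cycle ts n m z = cyclic_succ (block n ts m x) z"
    using quot_cycle_eq_cyclic_succ[OF tr so m nested] block_eq_if_mem[OF z] by simp
qed

lemma num_cycles_quot_cycle_Suc_le:
  assumes n: "1 \<le> n" and tr: "\<forall>t\<in>set ts. is_transp n t" and m: "m < length ts"
  shows "num_cycles n (quot_cycle ts n (Suc m)) \<le> num_cycles n (quot_cycle ts n m) + 1"
proof -
  have "fst (ts ! m) \<in> {1..n}" "snd (ts ! m) \<in> {1..n}"
    using is_transp_nthD[OF tr m] by auto
  from card_orbits_transpose_comp_le[OF quot_cycle_permutes[OF n tr] _ this]
  show ?thesis by (simp add: num_cycles_def quot_cycle_Suc[OF m] transp_perm_def)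
qed

lemma num_cycles_quot_cycle_le:
  assumes n: "1 \<le> n" and tr: "\<forall>t\<in>set ts. is_transp n t"
  shows "m \<le> length ts \<Longrightarrow> num_cycles n (quot_cycle ts n m) \<le> Suc m"
proof (induction m)
  case (Suc m)
  then show ?case using num_cycles_quot_cycle_Suc_le[OF n tr, of m] by simp
qed (simp add: num_cycles_long_cycle[OF n])

lemma num_cycles_quot_cycle_Suc_split:
  assumes n: "1 \<le> n" and tr: "\<forall>t\<in>set ts. is_transp n t" and so: "sorted (map fst ts)"
    and m: "m < length ts" and nested: "nested_upto ts (Suc m)"
  shows "num_cycles n (quot_cycle ts n (Suc m)) = num_cycles n (quot_cycle ts n m) + 1"
proof -
  define a b where "a = fst (ts ! m)" and "b = snd (ts ! m)"
  have ab: "a \<in> {1..n}" "b \<in> {1..n}" "a < b"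
    using is_transp_nthD[OF tr m] by (auto simp: a_def b_def)
  have "quot_cycle ts n m = transpose a b \<circ> quot_cycle ts n (Suc m)"
    by (simp add: quot_cycle_Suc[OF m] transp_perm_def a_def b_def o_assoc)
  moreover have "block n ts (Suc m) a = block n ts m a \<inter> {a..<b}"
    using ab by (simp add: block_Suc transp_interval_def a_def b_def)
  then have "b \<notin> orbit (quot_cycle ts n (Suc m)) a"
    using orbit_quot_cycle[OF tr so _ nested] m ab by simp
  ultimately show ?thesis
    using card_orbits_transpose_comp_merge[OF quot_cycle_permutes[OF n tr] _ ab(1,2)]
    by (simp add: num_cycles_def)
qed

lemma num_cycles_quot_cycle_Suc_crossing:
  assumes n: "1 \<le> n" and tr: "\<forall>t\<in>set ts. is_transp n t" and so: "sorted (map fst ts)"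
    and m: "m < length ts" and nested: "nested_upto ts m" and crossing: "\<not> nested_upto ts (Suc m)"
  shows "num_cycles n (quot_cycle ts n (Suc m)) + 1 = num_cycles n (quot_cycle ts n m)"
proof -
  define a b where "a = fst (ts ! m)" and "b = snd (ts ! m)"
  have ab: "a \<in> {1..n}" "b \<in> {1..n}"
    using is_transp_nthD[OF tr m] by (auto simp: a_def b_def)
  obtain l where l: "l < m" "a < snd (ts ! l)" "snd (ts ! l) \<le> b"
    using nested crossing by (auto simp: nested_upto_Suc not_le not_less a_def b_def)
  have "fst (ts ! l) \<le> a" using sorted_nth_mono[OF so, of l m] l m by (simp add: a_def)
  \<comment> \<open>the interval of the l-th transposition separates a from b\<close>
  with l have "b \<notin> block n ts m a" by (auto simp: block_def transp_interval_def)
  then have "b \<notin> orbit (quot_cycle ts n m) a"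
    using orbit_quot_cycle[OF tr so _ nested] m ab by simp
  then show ?thesis
    using card_orbits_transpose_comp_merge[OF quot_cycle_permutes[OF n tr] _ ab]
    by (simp add: num_cycles_def quot_cycle_Suc[OF m] transp_perm_def a_def b_def)
qed

lemma num_cycles_quot_cycle_eq_iff:
  assumes n: "1 \<le> n" and tr: "\<forall>t\<in>set ts. is_transp n t" and so: "sorted (map fst ts)"
  shows "m \<le> length ts \<Longrightarrow> num_cycles n (quot_cycle ts n m) = Suc m \<longleftrightarrow> nested_upto ts m"
proof (induction m)
  case 0
  then show ?case by (simp add: num_cycles_long_cycle[OF n] nested_upto_def)
next
  case (Suc m)
  then have m: "m < length ts" by simp
  show ?case
  proof (cases "nested_upto ts m")
    case True
    then have "num_cycles n (quot_cycle ts n m) = Suc m" using Suc.IH m by simp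
    then show ?thesis
      using num_cycles_quot_cycle_Suc_split[OF n tr so m]
        num_cycles_quot_cycle_Suc_crossing[OF n tr so m True]
      by (cases "nested_upto ts (Suc m)") auto
  next
    case False
    then have "num_cycles n (quot_cycle ts n m) \<noteq> Suc m" using Suc.IH m by simp
    then have "num_cycles n (quot_cycle ts n m) \<le> m"
      using num_cycles_quot_cycle_le[OF n tr, of m] m by simp
    moreover have "num_cycles n (quot_cycle ts n (Suc m)) \<le> num_cycles n (quot_cycle ts n m) + 1"
      using num_cycles_quot_cycle_Suc_le[OF n tr m] .
    ultimately show ?thesis using False by (simp add: nested_upto_Suc)
  qed
qed

lemma prod_transps_image_subset:
  "\<forall>t\<in>set ts. transp_perm t ` A \<subseteq> A \<Longrightarrow> prod_transps ts ` A \<subseteq> A"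
  by (induction ts) (auto simp: image_comp[symmetric])

lemma transpose_image_interval_subset:
  fixes a b i j :: nat
  assumes "a \<le> i" "i < j" "b \<le> i \<or> j < b"
  shows "transpose i j ` {a..<b} \<subseteq> {a..<b}"
  using assms by (auto simp: transpose_def)

lemma orbit_subset_if_image_subset:
  assumes "f ` A \<subseteq> A" "x \<in> A" shows "orbit f x \<subseteq> A"
proof
  fix y assume "y \<in> orbit f x"
  then show "y \<in> A" by induction (use assms in auto)
qed

lemma num_cycles_prod_transps:
  "\<forall>t\<in>set ts. is_transp n t \<Longrightarrow> sorted (map fst ts) \<Longrightarrow> nested_upto ts (length ts) \<Longrightarrow>
    num_cycles n (prod_transps ts) + length ts = n"
proof (induction ts)
  case Nil
  then show ?case using num_cycles_id[of n] by (simp add: id_def)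
next
  case (Cons t ts)
  define a b where "a = fst t" and "b = snd t"
  have tr: "\<forall>t\<in>set ts. is_transp n t" and ab: "a \<in> {1..n}" "b \<in> {1..n}" "a < b"
    using Cons.prems(1) by (auto simp: is_transp_def a_def b_def)
  have so: "sorted (map fst ts)" and "\<forall>t'\<in>set ts. a \<le> fst t'"
    using Cons.prems(2) by (simp_all add: a_def)
  moreover have "nested_upto ts (length ts)"
    and "\<forall>t'\<in>set ts. b \<le> fst t' \<or> snd t' < b"
    using nested_upto_Cons[OF Cons.prems(3)] by (simp_all add: b_def)
  ultimately have IH: "num_cycles n (prod_transps ts) + length ts = n"
    and "\<forall>t'\<in>set ts. transp_perm t' ` {a..<b} \<subseteq> {a..<b}"
    using Cons.IH tr transpose_image_interval_subset by (auto simp: transp_perm_def is_transp_def)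
  \<comment> \<open>the later transpositions never leave [a, b), so b is not in the cycle of a\<close>
  then have "orbit (prod_transps ts) a \<subseteq> {a..<b}"
    using ab by (intro orbit_subset_if_image_subset prod_transps_image_subset) auto
  then have "b \<notin> orbit (prod_transps ts) a" by auto
  then have "num_cycles n (prod_transps (t # ts)) + 1 = num_cycles n (prod_transps ts)"
    using card_orbits_transpose_comp_merge[OF prod_transps_permutes[OF tr] _ ab(1,2)]
    by (simp add: num_cycles_def transp_perm_def a_def b_def)
  with IH show ?case by (simp del: prod_transps_Cons)
qed

lemma mem_Sigma_n_iff_num_cycles:
  assumes n: "1 \<le> n" and len: "length ts = k" and tr: "\<forall>t\<in>set ts. is_transp n t"
  shows "ts \<in> Sigma_n n k \<longleftrightarrow>
    num_cycles n (prod_transps ts) + k = n \<and> num_cycles n (quot_cycle ts n k) = Suc k"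
proof -
  have bounds: "1 \<le> num_cycles n f" "num_cycles n f \<le> n" for f
    using num_cycles_pos[OF n] num_cycles_le by auto
  have "inv (prod_transps ts) \<circ> long_cycle n = quot_cycle ts n k"
    using inv_prod_transps_comp_long_cycle len by simp
  then show ?thesis
    using len tr bounds[of "prod_transps ts"] bounds[of "quot_cycle ts n k"]
    by (auto simp: Sigma_n_def perm_le_def perm_len_def num_cycles_long_cycle[OF n])
qed

theorem proposition3p5:
  fixes n k :: nat and ts :: "(nat \<times> nat) list"
  assumes "n \<ge> 1" and "k \<ge> 1"
    and "length ts = k"
    and "\<forall>t\<in>set ts. is_transp n t"
    and "sorted (map fst ts)"
  shows "ts \<in> Sigma_n n k \<longleftrightarrow>
    (\<forall>l m. l < m \<and> m < k \<longrightarrow>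
       snd (ts ! l) \<le> fst (ts ! m) \<or> snd (ts ! l) > snd (ts ! m))"
proof -
  note n = assms(1) and len = assms(3) and tr = assms(4) and so = assms(5)
  have sigma: "ts \<in> Sigma_n n k \<longleftrightarrow>
      num_cycles n (prod_transps ts) + k = n \<and> num_cycles n (quot_cycle ts n k) = Suc k"
    by (rule mem_Sigma_n_iff_num_cycles[OF n len tr])
  have quot: "num_cycles n (quot_cycle ts n k) = Suc k \<longleftrightarrow> nested_upto ts k"
    using num_cycles_quot_cycle_eq_iff[OF n tr so, of k] len by simp
  have prod: "nested_upto ts k \<Longrightarrow> num_cycles n (prod_transps ts) + k = n"
    using num_cycles_prod_transps[OF tr so] len by simp
  have "ts \<in> Sigma_n n k \<longleftrightarrow> nested_upto ts k"
    using sigma quot prod by blast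
  then show ?thesis by (auto simp: nested_upto_def)
qed

end
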